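(* For all integers $t,a,b,r$ with $a\ge2$ and $b\ge1$, define \[ f(t,a,b,r)=\sum_{i=1}^{a-1}(-1)^{a+i}\binom{t-1}{i-1}\binom{t-2-a+r+i}{b-1}, \] \[ g(t,a,b,r)=-\binom{t-2}{a-2}\binom{t-2+r}{b-1}+\sum_{i=1}^{a-1}(-1)^{a+i+1}\binom{t-2}{i-1}\binom{t-2-a+r+i}{b-2}. \] Then $f(t,a,b,r)=g(t,a,b,r)$ for all such $t,a,b,r$.
   Context: Binomial coefficients are polynomials in the upper entry: $\binom{x}{k}=\frac{x(x-1)\cdots(x-k+1)}{k!}$ for integers $k\ge0$ and any integer $x$ (possibly negative), and $\binom{x}{k}=0$ for $k<0$. *)

theory Defs
  imports Complex_Main
begin

definition ibinom :: "int \<Rightarrow> int \<Rightarrow> rat" where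
  "ibinom x k = (if k < 0 then 0 else (of_int x :: rat) gchoose (nat k))"

definition f55 :: "int \<Rightarrow> int \<Rightarrow> int \<Rightarrow> int \<Rightarrow> rat" where
  "f55 t a b r = (\<Sum>i\<in>{1..a-1}. (-1) ^ nat (a+i) * ibinom (t-1) (i-1) * ibinom (t-2-a+r+i) (b-1))"

definition g55 :: "int \<Rightarrow> int \<Rightarrow> int \<Rightarrow> int \<Rightarrow> rat" where
  "g55 t a b r = - ibinom (t-2) (a-2) * ibinom (t-2+r) (b-1)
     + (\<Sum>i\<in>{1..a-1}. (-1) ^ nat (a+i+1) * ibinom (t-2) (i-1) * ibinom (t-2-a+r+i) (b-2))"

end

theory Submission
  imports Defs
begin

(* With u i = C(t-2, i-1) C(t-1-a+r+i, b-1), Pascal's rule applied in both factors shows that the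
   i-th summand of f minus the i-th summand of the sum in g is (-1)^(a+i) (u i + u (i-1)).
   This alternating sum telescopes to -u (a-1) (as u 0 = 0), the first term of g.
   Pascal's rule holds for every integer lower entry. *)

lemma ibinom_neg: "k < 0 \<Longrightarrow> ibinom x k = 0"
  by (simp add: ibinom_def)

lemma ibinom_pascal: "ibinom (x + 1) k = ibinom x k + ibinom x (k - 1)"
proof -
  consider "k \<le> 0" | m where "k = int (Suc m)"
    by (metis not_le gr0_implies_Suc pos_int_cases)
  then show ?thesis
  proof cases
    case 1
    then show ?thesis by (simp add: ibinom_def)
  next
    case 2
    then have "nat k = Suc m" "nat (k - 1) = m" by auto
    with 2 show ?thesis
      using gbinomial_Suc_Suc[of "of_int x :: rat" m] by (simp add: ibinom_def add.commute)
  qed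
qed

lemma ibinom_product_pascal:
  "ibinom x j * ibinom (z + 1) k + ibinom x (j - 1) * ibinom z k
     = ibinom (x + 1) j * ibinom z k + ibinom x j * ibinom z (k - 1)"
  unfolding ibinom_pascal by (simp add: algebra_simps)

lemma neg_one_power_nat_Suc:
  "0 \<le> k \<Longrightarrow> (-1 :: 'a :: ring_1) ^ nat (k + 1) = - ((-1) ^ nat k)"
  by (simp add: nat_add_distrib)

lemma sum_int_telescope:
  fixes h :: "int \<Rightarrow> 'a :: ab_group_add"
  assumes "m \<le> n"
  shows "(\<Sum>i\<in>{m..n}. h i - h (i - 1)) = h n - h (m - 1)"
  using assms
proof (induction n rule: int_ge_induct)
  case base
  then show ?case by simp
next
  case (step n)
  then have "{m..n + 1} = insert (n + 1) {m..n}" by auto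
  with step show ?case by simp
qed

lemma sum_alternating_telescope:
  fixes u :: "int \<Rightarrow> 'a :: ring_1"
  assumes "m \<le> n" and "1 \<le> c + m"
  shows "(\<Sum>i\<in>{m..n}. (-1) ^ nat (c + i) * (u i + u (i - 1)))
           = (-1) ^ nat (c + n) * u n + (-1) ^ nat (c + m) * u (m - 1)"
proof -
  define h where "h i = (-1) ^ nat (c + i) * u i" for i
  have "(-1) ^ nat (c + i) * (u i + u (i - 1)) = h i - h (i - 1)" if "i \<in> {m..n}" for i
    using that assms neg_one_power_nat_Suc[of "c + (i - 1)", where 'a = 'a]
    by (simp add: h_def algebra_simps)
  then have "(\<Sum>i\<in>{m..n}. (-1) ^ nat (c + i) * (u i + u (i - 1))) = h n - h (m - 1)"
    using sum_int_telescope[OF assms(1)] by simp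
  also have "\<dots> = (-1) ^ nat (c + n) * u n + (-1) ^ nat (c + m) * u (m - 1)"
    using assms neg_one_power_nat_Suc[of "c + (m - 1)", where 'a = 'a] by (simp add: h_def)
  finally show ?thesis .
qed

theorem lemma5p5:
  fixes t a b r :: int
  assumes "a \<ge> 2" and "b \<ge> 1"
  shows "f55 t a b r = g55 t a b r"
proof -
  define u where "u i = ibinom (t - 2) (i - 1) * ibinom (t - 1 - a + r + i) (b - 1)" for i
  have summand: "(-1) ^ nat (a + i) * ibinom (t - 1) (i - 1) * ibinom (t - 2 - a + r + i) (b - 1)
      - (-1) ^ nat (a + i + 1) * ibinom (t - 2) (i - 1) * ibinom (t - 2 - a + r + i) (b - 2)
      = (-1) ^ nat (a + i) * (u i + u (i - 1))" if "i \<in> {1..a - 1}" for i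
    using that assms(1) neg_one_power_nat_Suc[of "a + i", where 'a = rat]
      ibinom_product_pascal[of "t - 2" "i - 1" "t - 2 - a + r + i" "b - 1"]
    by (simp add: u_def algebra_simps)
  have "f55 t a b r - (\<Sum>i\<in>{1..a - 1}. (-1) ^ nat (a + i + 1) * ibinom (t - 2) (i - 1)
          * ibinom (t - 2 - a + r + i) (b - 2))
        = (\<Sum>i\<in>{1..a - 1}. (-1) ^ nat (a + i) * (u i + u (i - 1)))"
    unfolding f55_def sum_subtractf[symmetric] using summand by (rule sum.cong[OF refl])
  also have "\<dots> = (-1) ^ nat (a + (a - 1)) * u (a - 1)"
    using sum_alternating_telescope[of 1 "a - 1" a u] assms(1) by (simp add: u_def ibinom_neg)
  also have "\<dots> = - ibinom (t - 2) (a - 2) * ibinom (t - 2 + r) (b - 1)"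
  proof -
    have "nat (a + (a - 1)) = Suc (2 * nat (a - 1))" using assms(1) by simp
    then show ?thesis by (simp add: u_def algebra_simps)
  qed
  finally show ?thesis unfolding g55_def by (simp add: algebra_simps)
qed

end
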